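(* Let $f\in\{0,1\}^n$ have a $2$-tilde-error overlap of shift $r$ with error positions $i<j$ and operations $O_i,O_j$. Then the word $\tilde\alpha_r(f)=\mathrm{pre}_r(f)\,O_i(f)$ is $f$-free.
   Context: Words are over $\{0,1\}$. For $w$ of length $n$: $w[k]$ is its $k$-th symbol, $\mathrm{pre}_l(w)=w[1..l]$ and $\mathrm{suf}_l(w)=w[n-l+1..n]$. A word is $f$-free if it does not contain $f$ as a factor. Operations: the replacement $R_i$ flips the symbol at position $i$. The swap $S_i$ is defined when $w[i]\ne w[i+1]$ and exchanges these two symbols. $\mathrm{dist}_\sim(u,v)$ is the minimum number of replacements and swaps transforming $u$ into the equal-length word $v$. A tilde-transformation is minimal if it uses exactly $\mathrm{dist}_\sim$ operations and modifies each position at most once. $f$ has a $2$-tilde-error overlap of length $l=n-r$ (with $1\le l\le n-1$; $r$ is the shift) if $\mathrm{dist}_\sim(\mathrm{pre}_l(f),\mathrm{suf}_l(f))=2$. In that case fix a minimal tilde-transformation from $\mathrm{pre}_l(f)$ to $\mathrm{suf}_l(f)$. It consists of two operations $O_i\in\{R_i,S_i\}$ and $O_j\in\{R_j,S_j\}$ acting at positions $i<j$ (the error positions). Since positions $1..l$ of $\mathrm{pre}_l(f)$ are positions of $f$, the words $O_i(f)$ and $O_j(f)$ are defined by applying the same operations to $f$. The overlap has type RR, SR, RS or SS according to whether $(O_i,O_j)$ is (replacement, replacement), (swap, replacement), (replacement, swap) or (swap, swap). *)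

theory Defs
  imports Main
begin

text \<open>Binary words are bool lists; positions are 1-indexed: w[k] = w ! (k - 1).\<close>

datatype tilde_op = Repl nat | Swap nat

fun op_pos :: "tilde_op \<Rightarrow> nat" where
  "op_pos (Repl i) = i"
| "op_pos (Swap i) = i"

fun op_mod :: "tilde_op \<Rightarrow> nat set" where
  "op_mod (Repl i) = {i}"
| "op_mod (Swap i) = {i, Suc i}"

fun apply_op :: "tilde_op \<Rightarrow> bool list \<Rightarrow> bool list option" where
  "apply_op (Repl i) w =
     (if 1 \<le> i \<and> i \<le> length w then Some (w[i - 1 := \<not> w ! (i - 1)]) else None)"
| "apply_op (Swap i) w =
     (if 1 \<le> i \<and> i < length w \<and> w ! (i - 1) \<noteq> w ! i
      then Some (w[i - 1 := w ! i, i := w ! (i - 1)]) else None)"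

fun apply_ops :: "tilde_op list \<Rightarrow> bool list \<Rightarrow> bool list option" where
  "apply_ops [] w = Some w"
| "apply_ops (o1 # os) w = Option.bind (apply_op o1 w) (apply_ops os)"

definition dist_tilde :: "bool list \<Rightarrow> bool list \<Rightarrow> nat" where
  "dist_tilde u v = (LEAST k. \<exists>os. length os = k \<and> apply_ops os u = Some v)"

definition minimal_tilde_trans :: "bool list \<Rightarrow> bool list \<Rightarrow> tilde_op list \<Rightarrow> bool" where
  "minimal_tilde_trans u v os \<longleftrightarrow>
     apply_ops os u = Some v \<and> length os = dist_tilde u v \<and>
     (\<forall>a < length os. \<forall>b < length os. a \<noteq> b \<longrightarrow> op_mod (os ! a) \<inter> op_mod (os ! b) = {})"

definition is_factor :: "bool list \<Rightarrow> bool list \<Rightarrow> bool" where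
  "is_factor x w \<longleftrightarrow> (\<exists>p s. w = p @ x @ s)"

definition factor_free :: "bool list \<Rightarrow> bool list \<Rightarrow> bool" where
  "factor_free x w \<longleftrightarrow> \<not> is_factor x w"

end

theory Submission
  imports Defs
begin

text \<open>Let w = O_i(f) and \<alpha> = pre_r(f) w. Since O_j carries pre_l(w) to suf_l(f), the
  word \<alpha> agrees with f at every position before r + j and differs from it at r + j, so f
  does not occur at offset 0. An occurrence at an offset 0 < p \<le> r makes f p-periodic on that
  common prefix, and comparing \<alpha> at r + i and r + i + p gives w[i] = w[i + p]. If O_i leaves
  position i + p alone this yields w[i] = f[i + p] = f[i], contradicting the error at i;
  otherwise O_i is the swap S_i and p = 1, and f[i] \<noteq> f[i + 1] contradicts the period.\<close>

lemma apply_op_length: "apply_op Q w = Some w' \<Longrightarrow> length w' = length w"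
  by (cases Q) (auto split: if_splits)

lemma apply_op_pos_bounds: "apply_op Q w = Some w' \<Longrightarrow> 1 \<le> op_pos Q \<and> op_pos Q \<le> length w"
  by (cases Q) (auto split: if_splits)

lemma op_mod_subset: "op_mod Q \<subseteq> {op_pos Q, Suc (op_pos Q)}"
  by (cases Q) auto

lemma apply_op_nth_other: "apply_op Q w = Some w' \<Longrightarrow> Suc k \<notin> op_mod Q \<Longrightarrow> w' ! k = w ! k"
  by (cases Q) (auto split: if_splits)

lemma apply_op_nth_pos: "apply_op Q w = Some w' \<Longrightarrow> w' ! (op_pos Q - 1) \<noteq> w ! (op_pos Q - 1)"
  by (cases Q) (auto split: if_splits)

lemma apply_op_Suc_pos_mod:
  "apply_op Q w = Some w' \<Longrightarrow> Suc (op_pos Q) \<in> op_mod Q \<Longrightarrow> w ! (op_pos Q - 1) \<noteq> w ! op_pos Q"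
  by (cases Q) (auto split: if_splits)

lemma apply_op_take:
  "apply_op Q (take l w) = Some x \<Longrightarrow> \<exists>y. apply_op Q w = Some y \<and> take l y = x"
  by (cases Q) (auto simp: take_update_swap split: if_splits)

lemma apply_op_commute:
  assumes "op_mod A \<inter> op_mod B = {}" "apply_op A w = Some x" "apply_op B x = Some y"
  shows "\<exists>x'. apply_op B w = Some x' \<and> apply_op A x' = Some y"
  using assms by (cases A; cases B) (auto simp: nth_list_update list_update_swap split: if_splits)

text \<open>The operations of a minimal transformation act on disjoint positions, so they may be
  applied in either order.\<close>

lemma minimal_tilde_trans_two_ops:
  assumes "minimal_tilde_trans u v os" "length os = 2" "set os = {A, B}" "A \<noteq> B"
  shows "\<exists>x. apply_op A u = Some x \<and> apply_op B x = Some v"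
proof -
  obtain a b where os: "os = [a, b]"
    using assms(2) by (auto simp: length_Suc_conv numeral_2_eq_2)
  have "op_mod (os ! 0) \<inter> op_mod (os ! 1) = {}"
    using assms(1,2) unfolding minimal_tilde_trans_def by simp
  then have disjoint: "op_mod a \<inter> op_mod b = {}"
    using os by simp
  obtain x where x: "apply_op a u = Some x" "apply_op b x = Some v"
    using assms(1) os unfolding minimal_tilde_trans_def by (auto split: Option.bind_splits)
  have "a = A \<and> b = B \<or> a = B \<and> b = A"
    using assms(3,4) os by (simp add: doubleton_eq_iff)
  then show ?thesis
    using x apply_op_commute[OF disjoint x] by auto
qed

text \<open>Once the operations are applied in the order O_i, O_j, only i < j is needed, not their
  disjointness.\<close>

locale two_tilde_error_overlap =
  fixes f w :: "bool list" and r :: nat and Oi Oj :: tilde_op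
  assumes Oi_f: "apply_op Oi f = Some w"
    and Oj_w: "apply_op Oj (take (length f - r) w) = Some (drop r f)"
    and pos_less: "op_pos Oi < op_pos Oj"
begin

abbreviation alpha :: "bool list" where
  "alpha \<equiv> take r f @ w"

lemma length_w: "length w = length f"
  using apply_op_length[OF Oi_f] .

lemma Oj_bounds: "1 \<le> op_pos Oj" "r + op_pos Oj \<le> length f"
  using apply_op_pos_bounds[OF Oj_w] length_w by auto

lemma alpha_nth_shift: "alpha ! (r + k) = w ! k"
  using Oj_bounds by (simp add: nth_append)

lemma alpha_nth_eq:
  assumes "k < r + op_pos Oj - 1"
  shows "alpha ! k = f ! k"
proof (cases "k < r")
  case True
  then show ?thesis
    using Oj_bounds by (simp add: nth_append)
next
  case False
  define m where "m = k - r"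
  have k: "k = r + m" and m: "Suc m < op_pos Oj" "m < length f - r"
    using False assms Oj_bounds unfolding m_def by auto
  have "Suc m \<notin> op_mod Oj"
    using op_mod_subset[of Oj] m(1) by auto
  then show ?thesis
    using apply_op_nth_other[OF Oj_w] m(2) unfolding k alpha_nth_shift by simp
qed

lemma alpha_nth_neq: "alpha ! (r + op_pos Oj - 1) \<noteq> f ! (r + op_pos Oj - 1)"
proof -
  have J: "op_pos Oj - 1 < length f - r" "r + op_pos Oj - 1 = r + (op_pos Oj - 1)"
    using Oj_bounds by auto
  show ?thesis
    using apply_op_nth_pos[OF Oj_w] J(1) unfolding J(2) alpha_nth_shift by simp
qed

lemma occurrence_not_at_start: "alpha \<noteq> f @ S"
proof
  assume "alpha = f @ S"
  moreover have "r + op_pos Oj - 1 < length f"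
    using Oj_bounds by auto
  ultimately show False
    using alpha_nth_neq by (simp add: nth_append)
qed

lemma occurrence_not_shifted:
  assumes alpha: "alpha = P @ f @ S" and "P \<noteq> []"
  shows False
proof -
  define p where "p = length P"
  define I where "I = op_pos Oi - 1"
  have "length alpha = r + length f"
    using Oj_bounds length_w by simp
  then have "0 < p" "p \<le> r"
    using assms unfolding p_def by auto
  have I: "op_pos Oi = Suc I" "I < op_pos Oj - 1"
    using apply_op_pos_bounds[OF Oi_f] pos_less unfolding I_def by auto
  have occ: "alpha ! (p + k) = f ! k" if "k < length f" for k
    using alpha that unfolding p_def by (simp add: nth_append)
  have period: "f ! (p + I) = f ! I"
    using occ[of I] alpha_nth_eq[of "p + I"] I Oj_bounds \<open>p \<le> r\<close> by simp
  have "w ! I = f ! (r + I)"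
    using alpha_nth_shift[of I] alpha_nth_eq[of "r + I"] I by simp
  also have "\<dots> = w ! (p + I)"
    using occ[of "r + I"] alpha_nth_shift[of "p + I"] I Oj_bounds by (simp add: add.left_commute)
  finally have w_shift: "w ! I = w ! (p + I)" .
  show False
  proof (cases "Suc (p + I) \<in> op_mod Oi")
    case True
    then have "p = 1" "Suc (op_pos Oi) \<in> op_mod Oi"
      using op_mod_subset[of Oi] I \<open>0 < p\<close> by auto
    then show False
      using apply_op_Suc_pos_mod[OF Oi_f] period I by simp
  next
    case False
    then have "w ! I = f ! I"
      using w_shift period apply_op_nth_other[OF Oi_f] by simp
    then show False
      using apply_op_nth_pos[OF Oi_f] I by simp
  qed
qed

lemma factor_free_alpha: "factor_free f alpha"
  unfolding factor_free_def is_factor_def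
  using occurrence_not_at_start occurrence_not_shifted by (metis append_Nil)

end

theorem lemma3:
  fixes f :: "bool list" and n r l i j :: nat and Oi Oj :: tilde_op
  assumes "length f = n"
    and "l = n - r" and "1 \<le> l" and "l \<le> n - 1"
    and "dist_tilde (take l f) (drop (n - l) f) = 2"
    and "minimal_tilde_trans (take l f) (drop (n - l) f) os"
    and "set os = {Oi, Oj}"
    and "op_pos Oi = i" and "op_pos Oj = j" and "i < j"
  shows "\<exists>w. apply_op Oi f = Some w \<and> factor_free f (take r f @ w)"
proof -
  have r: "n - l = r" "l = length f - r"
    using assms(1-4) by auto
  have "length os = 2"
    using assms(5,6) unfolding minimal_tilde_trans_def by simp
  then obtain x where x: "apply_op Oi (take l f) = Some x" "apply_op Oj x = Some (drop r f)"
    using minimal_tilde_trans_two_ops[OF assms(6)] assms(7-10) r(1) by fastforce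
  obtain w where w: "apply_op Oi f = Some w" "take l w = x"
    using apply_op_take[OF x(1)] by blast
  have "two_tilde_error_overlap f w r Oi Oj"
    using w x(2) r(2) assms(8-10) by unfold_locales auto
  then show ?thesis
    using w(1) two_tilde_error_overlap.factor_free_alpha by blast
qed

end
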